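(* Let $n\in\mathbb N$, $\rho>0$, $\delta\in\mathbb R$, and $\mu_{\rho,\delta}(u)=\langle u\rangle^\delta e^{-\rho|u|^2}$ for $u\in\mathbb R^n$. If $\alpha>-n$ and $\beta\in\mathbb R$, then \[ I_{\alpha,\beta}(u)=\int_{\mathbb R^n}|w|^\alpha\langle w\rangle^\beta\mu_{\rho,\delta}(w+u)\,dw\sim\langle u\rangle^{\alpha+\beta}, \] i.e. there exist constants $C_1,C_2>0$ (independent of $u$) with $C_1\langle u\rangle^{\alpha+\beta}\le I_{\alpha,\beta}(u)\le C_2\langle u\rangle^{\alpha+\beta}$ for all $u\in\mathbb R^n$.
   Context: $\langle u\rangle=(1+|u|^2)^{1/2}$. *)

theory Defs
  imports "HOL-Analysis.Analysis"
begin

definition jbr :: "'a::real_normed_vector \<Rightarrow> real" where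
  "jbr u = sqrt (1 + (norm u)\<^sup>2)"

definition mu_weight :: "real \<Rightarrow> real \<Rightarrow> 'a::real_normed_vector \<Rightarrow> real" where
  "mu_weight \<rho> \<delta> u = jbr u powr \<delta> * exp (- \<rho> * (norm u)\<^sup>2)"

definition I_ab :: "real \<Rightarrow> real \<Rightarrow> real \<Rightarrow> real \<Rightarrow> real ^ 'n \<Rightarrow> real" where
  "I_ab \<rho> \<delta> \<alpha> \<beta> u =
     (\<integral>w. norm w powr \<alpha> * jbr w powr \<beta> * mu_weight \<rho> \<delta> (w + u) \<partial>lborel)"

end

theory Submission
  imports Defs
begin

(* The weight mu_{rho,delta}(w + u) concentrates the integral near w = -u.
   For |u| >= 1, split the integral at |w + u| = |u|/2: near -u the factor |w|^alpha <w>^beta is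
   comparable to <u>^(alpha+beta) and mu has finite total mass, while away from -u the Gaussian
   in mu is bounded by exp(-c (|u|^2 + |w|^2)), which is smaller than any power of <u>.
   For |u| <= 1 the integral is simply bounded.  For the lower bound, integrate over a ball of
   radius 1/4 just beyond -u, on which every factor is comparable to a constant or to a power
   of <u>.  Integrability of |w|^alpha near 0 (alpha > -n) and of |w|^(-n-1) at infinity follows
   from a dyadic decomposition into annuli. *)

lemma powr_comparable:
  fixes a x g :: real
  assumes "a > 0" "a / 4 \<le> x" "x \<le> 4 * a"
  shows "4 powr (-\<bar>g\<bar>) * a powr g \<le> x powr g \<and> x powr g \<le> 4 powr \<bar>g\<bar> * a powr g"
proof -
  have x: "x > 0" using assms by simp
  have ratio: "1/4 \<le> x/a" "x/a \<le> 4" using assms by (auto simp: field_simps)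
  have "4 powr (-\<bar>g\<bar>) \<le> (x/a) powr g \<and> (x/a) powr g \<le> 4 powr \<bar>g\<bar>"
  proof (cases "g \<ge> 0")
    case True
    have "(1/4) powr g \<le> (x/a) powr g" "(x/a) powr g \<le> 4 powr g"
      using ratio x assms True by (auto intro!: powr_mono2)
    then show ?thesis using True by (simp add: powr_minus_divide powr_divide)
  next
    case False
    have "(x/a) powr g \<le> (1/4) powr g" "4 powr g \<le> (x/a) powr g"
      using ratio x assms False by (auto intro!: powr_mono2')
    then show ?thesis using False by (simp add: powr_minus_divide powr_divide)
  qed
  moreover have "x powr g = a powr g * (x/a) powr g" using assms x by (simp add: powr_divide)
  ultimately show ?thesis using assms by (auto simp: mult_left_mono mult.commute)
qed

lemma powr_mult_exp_bounded:
  fixes c m :: real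
  assumes c: "c > 0"
  obtains K where "K > 0" "\<And>t. t \<ge> 1 \<Longrightarrow> t powr m * exp (-c * t) \<le> K"
proof
  define N where "N = Suc (nat \<lceil>m\<rceil>)"
  have N: "m \<le> real N" "N > 0" unfolding N_def by linarith+
  show "(real N / c) ^ N > 0" using c N by simp
  fix t :: real assume t: "t \<ge> 1"
  \<comment> \<open>\<open>t\<^sup>N = (N/c)\<^sup>N (c t/N)\<^sup>N\<close> and \<open>y \<le> exp y\<close>\<close>
  have "t powr m \<le> t ^ N" using t N by (simp add: powr_realpow[symmetric] powr_mono)
  also have "\<dots> = (real N / c) ^ N * (c * t / real N) ^ N"
    using c N by (simp add: power_mult_distrib[symmetric])
  also have "\<dots> \<le> (real N / c) ^ N * exp (c * t / real N) ^ N"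
  proof -
    have "c * t / real N \<le> exp (c * t / real N)"
      using exp_ge_add_one_self[of "c * t / real N"] by linarith
    then show ?thesis using c t by (intro mult_left_mono power_mono) auto
  qed
  also have "exp (c * t / real N) ^ N = exp (c * t)"
    using N by (simp add: exp_of_nat_mult[symmetric])
  finally show "t powr m * exp (-c * t) \<le> (real N / c) ^ N"
    by (simp add: exp_minus field_simps)
qed

lemma powr_mult_gaussian_bounded:
  fixes c p :: real
  assumes "c > 0"
  obtains K where "K > 0" "\<And>r. r \<ge> 1 \<Longrightarrow> r powr p * exp (-c * r\<^sup>2) \<le> K"
proof -
  obtain K where K: "K > 0" "\<And>t. t \<ge> 1 \<Longrightarrow> t powr (p/2) * exp (-c * t) \<le> K"
    using powr_mult_exp_bounded[OF assms] by blast
  have "r powr p * exp (-c * r\<^sup>2) \<le> K" if r: "r \<ge> 1" for r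
  proof -
    have "r powr 2 = r\<^sup>2" using r by (simp add: powr_numeral)
    moreover have "(r powr 2) powr (p/2) = r powr p" by (subst powr_powr) simp
    ultimately have "(r\<^sup>2) powr (p/2) = r powr p" by simp
    then show ?thesis using K(2)[of "r\<^sup>2"] r by (simp add: one_le_power)
  qed
  with K(1) show thesis by (rule that)
qed

lemma jbr_ge_1: "jbr u \<ge> 1"
  unfolding jbr_def by simp

lemma jbr_pos: "jbr u > 0"
  using jbr_ge_1[of u] by simp

lemma norm_le_jbr: "norm u \<le> jbr u"
  unfolding jbr_def by (rule real_le_rsqrt) simp

lemma jbr_le_1_plus_norm: "jbr u \<le> 1 + norm u"
  unfolding jbr_def
  by (rule real_sqrt_le_iff'[THEN iffD2]) (auto simp: power2_eq_square algebra_simps)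

lemma jbr_powr_eq: "jbr u powr s = (1 + (norm u)\<^sup>2) powr (s/2)"
  unfolding jbr_def by (simp add: powr_half_sqrt[symmetric] powr_powr add_pos_nonneg)

lemma exp_neg_le_jbr_powr:
  fixes c s :: real
  assumes "c > 0"
  obtains K where "K > 0" "\<And>u :: 'a::real_normed_vector. exp (-c * (norm u)\<^sup>2) \<le> K * jbr u powr s"
proof -
  obtain K where K: "K > 0" "\<And>t. t \<ge> 1 \<Longrightarrow> t powr (-s/2) * exp (-c * t) \<le> K"
    using powr_mult_exp_bounded[OF assms] by blast
  have "exp (-c * (norm u)\<^sup>2) \<le> (K * exp c) * jbr u powr s" for u :: 'a
  proof -
    define t where "t = 1 + (norm u)\<^sup>2"
    have t: "t \<ge> 1" by (simp add: t_def)
    have "t powr (s/2) * t powr (-s/2) = 1" using t by (simp add: powr_add[symmetric])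
    moreover have "exp (-c * (norm u)\<^sup>2) = exp (-c * t) * exp c"
      by (simp add: t_def exp_add[symmetric] algebra_simps)
    ultimately have "exp (-c * (norm u)\<^sup>2) = t powr (s/2) * (t powr (-s/2) * exp (-c * t)) * exp c"
      by (metis mult.assoc mult_1)
    also have "\<dots> \<le> t powr (s/2) * K * exp c"
      using K(2)[OF t] by (intro mult_right_mono mult_left_mono) auto
    finally show ?thesis by (simp add: jbr_powr_eq t_def mult_ac)
  qed
  moreover have "K * exp c > 0" using K(1) by simp
  ultimately show thesis using that by blast
qed

lemma jbr_powr_bounds_if_norm_le_1:
  assumes "norm u \<le> 1"
  shows "4 powr (-\<bar>s\<bar>) \<le> jbr u powr s \<and> jbr u powr s \<le> 4 powr \<bar>s\<bar>"
  using powr_comparable[of 1 "jbr u" s] assms jbr_ge_1[of u] jbr_le_1_plus_norm[of u] by simp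

lemma jbr_powr_le_if_norm_ge_1:
  assumes "norm u \<ge> 1"
  shows "jbr u powr s \<le> 4 powr \<bar>s\<bar> * norm u powr s"
proof -
  have "norm u > 0" using assms by linarith
  then show ?thesis
    using powr_comparable[of "norm u" "jbr u" s] assms norm_le_jbr[of u] jbr_le_1_plus_norm[of u]
    by simp
qed

lemma mu_weight_nonneg: "mu_weight \<rho> \<delta> v \<ge> 0"
  unfolding mu_weight_def by simp

lemma mu_weight_le_gaussian:
  fixes \<rho> \<delta> :: real
  assumes "\<rho> > 0"
  obtains K where "K > 0"
    "\<And>v :: 'a::real_normed_vector. mu_weight \<rho> \<delta> v \<le> K * exp (-(\<rho>/2) * (norm v)\<^sup>2)"
proof -
  obtain K where K: "K > 0"
    "\<And>v :: 'a. exp (-(\<rho>/2) * (norm v)\<^sup>2) \<le> K * jbr v powr (-\<delta>)"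
    using exp_neg_le_jbr_powr[of "\<rho>/2"] assms by (metis half_gt_zero)
  have "mu_weight \<rho> \<delta> v \<le> K * exp (-(\<rho>/2) * (norm v)\<^sup>2)" for v :: 'a
  proof -
    have "mu_weight \<rho> \<delta> v = jbr v powr \<delta> * exp (-(\<rho>/2) * (norm v)\<^sup>2) * exp (-(\<rho>/2) * (norm v)\<^sup>2)"
      by (simp add: mu_weight_def mult.assoc exp_add[symmetric])
    also have "\<dots> \<le> jbr v powr \<delta> * (K * jbr v powr (-\<delta>)) * exp (-(\<rho>/2) * (norm v)\<^sup>2)"
      using K(2)[of v] by (intro mult_right_mono mult_left_mono) auto
    also have "\<dots> = K * exp (-(\<rho>/2) * (norm v)\<^sup>2)"
      using jbr_pos[of v] by (simp add: powr_minus field_simps)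
    finally show ?thesis .
  qed
  with K(1) show thesis by (rule that)
qed

lemma norm_power2_le_shift:
  fixes u w :: "'a::real_normed_vector"
  shows "(norm w)\<^sup>2 \<le> 2 * (norm (w + u))\<^sup>2 + 2 * (norm u)\<^sup>2"
proof -
  have "norm w \<le> norm (w + u) + norm u" using norm_triangle_sub[of w "w + u"] by simp
  then have "(norm w)\<^sup>2 \<le> (norm (w + u) + norm u)\<^sup>2" by (intro power_mono) auto
  also have "\<dots> \<le> 2 * (norm (w + u))\<^sup>2 + 2 * (norm u)\<^sup>2"
    using zero_le_power2[of "norm (w + u) - norm u"] by (simp add: power2_eq_square algebra_simps)
  finally show ?thesis .
qed

lemma gaussian_shift_le:
  fixes c :: real and u w :: "'a::real_normed_vector"
  assumes "c \<ge> 0"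
  shows "exp (-c * (norm (w + u))\<^sup>2) \<le> exp (c * (norm u)\<^sup>2) * exp (-(c/2) * (norm w)\<^sup>2)"
proof -
  have "(c/2) * (norm w)\<^sup>2 \<le> (c/2) * (2 * (norm (w + u))\<^sup>2 + 2 * (norm u)\<^sup>2)"
    using norm_power2_le_shift[of w u] assms by (intro mult_left_mono) auto
  then show ?thesis by (simp add: exp_add[symmetric] algebra_simps)
qed

lemma gaussian_shift_le_far:
  fixes c :: real and u w :: "'a::real_normed_vector"
  assumes "c \<ge> 0" "norm u \<le> 2 * norm (w + u)"
  shows "exp (-c * (norm (w + u))\<^sup>2) \<le> exp (-(c/8) * (norm u)\<^sup>2) * exp (-(c/20) * (norm w)\<^sup>2)"
proof -
  have "(norm u)\<^sup>2 \<le> (2 * norm (w + u))\<^sup>2" using assms(2) by (intro power_mono) auto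
  then have "(norm u)\<^sup>2 / 8 + (norm w)\<^sup>2 / 20 \<le> (norm (w + u))\<^sup>2"
    using norm_power2_le_shift[of w u] by (simp add: power_mult_distrib)
  then have "c * ((norm u)\<^sup>2 / 8 + (norm w)\<^sup>2 / 20) \<le> c * (norm (w + u))\<^sup>2"
    using assms(1) by (rule mult_left_mono)
  then show ?thesis by (simp add: exp_add[symmetric] algebra_simps)
qed

lemma nn_integral_norm_powr_annulus_le:
  fixes g a :: real
  assumes "a > 0"
  shows "(\<integral>\<^sup>+w. indicator {w::'a::euclidean_space. a/2 < norm w \<and> norm w \<le> a} w
            * ennreal (norm w powr g) \<partial>lborel)
         \<le> ennreal (4 powr \<bar>g\<bar> * unit_ball_vol DIM('a) * a powr (g + DIM('a)))"
proof -
  have "indicator {w::'a. a/2 < norm w \<and> norm w \<le> a} w * ennreal (norm w powr g)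
        \<le> ennreal (4 powr \<bar>g\<bar> * a powr g) * indicator (cball 0 a) w" for w :: 'a
    using powr_comparable[of a "norm w" g] assms by (auto simp: indicator_def)
  then have "(\<integral>\<^sup>+w. indicator {w::'a. a/2 < norm w \<and> norm w \<le> a} w * ennreal (norm w powr g) \<partial>lborel)
      \<le> (\<integral>\<^sup>+w. ennreal (4 powr \<bar>g\<bar> * a powr g) * indicator (cball (0::'a) a) w \<partial>lborel)"
    by (intro nn_integral_mono)
  also have "\<dots> = ennreal (4 powr \<bar>g\<bar> * a powr g) * emeasure lborel (cball (0::'a) a)"
    by (simp add: nn_integral_cmult_indicator)
  also have "\<dots> = ennreal (4 powr \<bar>g\<bar> * unit_ball_vol DIM('a) * a powr (g + DIM('a)))"
    using assms by (simp add: emeasure_cball ennreal_mult'[symmetric] powr_add powr_realpow mult_ac)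
  finally show ?thesis .
qed

lemma nn_integral_indicator_le_suminf_cover:
  fixes f :: "'a \<Rightarrow> ennreal" and A :: "nat \<Rightarrow> 'a set"
  assumes [measurable]: "\<And>k. A k \<in> sets M" "f \<in> borel_measurable M"
    and cover: "\<And>x. x \<in> S \<Longrightarrow> f x \<noteq> 0 \<Longrightarrow> \<exists>k. x \<in> A k"
  shows "(\<integral>\<^sup>+x. indicator S x * f x \<partial>M) \<le> (\<Sum>k. \<integral>\<^sup>+x. indicator (A k) x * f x \<partial>M)"
proof -
  have "indicator S x * f x \<le> (\<Sum>k. indicator (A k) x * f x)" for x
  proof (cases "x \<in> S \<and> f x \<noteq> 0")
    case True
    then obtain k where k: "x \<in> A k" using cover by blast
    define F where "F j = indicator (A j) x * f x" for j
    have "sum F {k} \<le> suminf F" by (rule sum_le_suminf[OF summableI]) auto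
    then have "indicator S x * f x \<le> suminf F" using True k by (simp add: F_def)
    then show ?thesis unfolding F_def .
  qed (auto simp: indicator_def)
  then have "(\<integral>\<^sup>+x. indicator S x * f x \<partial>M) \<le> (\<integral>\<^sup>+x. (\<Sum>k. indicator (A k) x * f x) \<partial>M)"
    by (intro nn_integral_mono)
  also have "\<dots> = (\<Sum>k. \<integral>\<^sup>+x. indicator (A k) x * f x \<partial>M)"
    by (intro nn_integral_suminf) measurable
  finally show ?thesis .
qed

lemma nn_integral_norm_powr_finite_if_geometric_annuli_cover:
  fixes S :: "'a::euclidean_space set" and g r q :: real
  assumes "r > 0" "q > 0" "q powr (g + DIM('a)) < 1"
    and cover: "\<And>w. w \<in> S \<Longrightarrow> w \<noteq> 0 \<Longrightarrow> \<exists>k. r * q^k / 2 < norm w \<and> norm w \<le> r * q^k"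
  shows "(\<integral>\<^sup>+w. indicator S w * ennreal (norm w powr g) \<partial>lborel) < \<infinity>"
proof -
  define A where "A k = {w::'a. r * q^k / 2 < norm w \<and> norm w \<le> r * q^k}" for k
  define C where "C = 4 powr \<bar>g\<bar> * unit_ball_vol DIM('a)"
  have [measurable]: "A k \<in> sets borel" for k unfolding A_def by measurable
  have "(\<integral>\<^sup>+w. indicator S w * ennreal (norm w powr g) \<partial>lborel)
      \<le> (\<Sum>k. \<integral>\<^sup>+w. indicator (A k) w * ennreal (norm w powr g) \<partial>lborel)"
    by (rule nn_integral_indicator_le_suminf_cover) (use cover in \<open>auto simp: A_def\<close>)
  also have "\<dots> \<le> (\<Sum>k. ennreal (C * r powr (g + DIM('a)) * (q powr (g + DIM('a)))^k))"
  proof (intro suminf_le)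
    fix k
    have "r * q^k > 0" using assms by simp
    then have "(\<integral>\<^sup>+w. indicator (A k) w * ennreal (norm w powr g) \<partial>lborel)
        \<le> ennreal (C * (r * q^k) powr (g + DIM('a)))"
      unfolding A_def C_def by (rule nn_integral_norm_powr_annulus_le)
    also have "(r * q^k) powr (g + DIM('a)) = r powr (g + DIM('a)) * (q powr (g + DIM('a)))^k"
      using assms by (simp add: powr_mult powr_realpow[symmetric] powr_powr mult.commute)
    finally show "(\<integral>\<^sup>+w. indicator (A k) w * ennreal (norm w powr g) \<partial>lborel)
        \<le> ennreal (C * r powr (g + DIM('a)) * (q powr (g + DIM('a)))^k)"
      by (simp only: mult.assoc)
  qed auto
  also have "\<dots> = ennreal (\<Sum>k. C * r powr (g + DIM('a)) * (q powr (g + DIM('a)))^k)"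
    using assms by (intro suminf_ennreal2 summable_mult summable_geometric) (auto simp: C_def)
  also have "\<dots> < \<infinity>" by simp
  finally show ?thesis .
qed

lemma ex_halving_annulus:
  fixes x :: real
  assumes "0 < x" "x \<le> 1"
  shows "\<exists>k. (1/2)^k / 2 < x \<and> x \<le> (1/2)^k"
proof -
  obtain m :: nat where "(1/2)^m < x" using real_arch_pow_inv[of x "1/2"] assms by auto
  moreover have "(1/2)^m < y \<Longrightarrow> y \<le> 1 \<Longrightarrow> \<exists>k. (1/2)^k / 2 < y \<and> y \<le> (1/2::real)^k" for y
  proof (induction m)
    case (Suc m)
    then show ?case by (cases "(1/2)^m < y") (auto intro: exI[of _ m])
  qed simp
  ultimately show ?thesis using assms by blast
qed

lemma ex_doubling_annulus:
  fixes x :: real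
  assumes "1 < x"
  shows "\<exists>k. 2 * 2^k / 2 < x \<and> x \<le> 2 * 2^k"
proof -
  obtain m :: nat where "x \<le> 2^m" using real_arch_pow[of 2 x] by (auto intro: less_imp_le)
  moreover have "y \<le> 2^m \<Longrightarrow> 1 < y \<Longrightarrow> \<exists>k. 2 * 2^k / 2 < y \<and> y \<le> 2 * (2::real)^k" for y
  proof (induction m)
    case (Suc m)
    then show ?case by (cases "y \<le> 2^m") (auto intro: exI[of _ m])
  qed simp
  ultimately show ?thesis using assms by blast
qed

lemma nn_integral_norm_powr_cball_finite:
  fixes g :: real
  assumes "g > - real DIM('a)"
  shows "(\<integral>\<^sup>+w. indicator (cball (0::'a::euclidean_space) 1) w * ennreal (norm w powr g) \<partial>lborel) < \<infinity>"
proof (rule nn_integral_norm_powr_finite_if_geometric_annuli_cover[where r = 1 and q = "1/2"])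
  have "1 < 2 powr (g + DIM('a))" using assms by (intro gr_one_powr) auto
  then show "(1/2) powr (g + DIM('a)) < 1" by (simp add: powr_divide)
qed (use ex_halving_annulus in auto)

lemma nn_integral_norm_powr_outside_cball_finite:
  fixes g :: real
  assumes "g < - real DIM('a)"
  shows "(\<integral>\<^sup>+w. indicator {w::'a::euclidean_space. 1 < norm w} w * ennreal (norm w powr g) \<partial>lborel) < \<infinity>"
proof (rule nn_integral_norm_powr_finite_if_geometric_annuli_cover[where r = 2 and q = 2])
  show "2 powr (g + DIM('a)) < 1" using assms by (intro powr_less_one) auto
qed (use ex_doubling_annulus in auto)

lemma integrable_if_norm_powr_bounds:
  fixes f :: "'a::euclidean_space \<Rightarrow> real" and \<alpha> C :: real
  assumes \<alpha>: "\<alpha> > - real DIM('a)" and [measurable]: "f \<in> borel_measurable lborel"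
    and near: "\<And>w. norm w \<le> 1 \<Longrightarrow> \<bar>f w\<bar> \<le> C * (norm w powr \<alpha> + 1)"
    and far: "\<And>w. norm w > 1 \<Longrightarrow> \<bar>f w\<bar> \<le> C * norm w powr (-(real DIM('a) + 1))"
  shows "integrable lborel f"
proof -
  have [measurable]: "cball (0::'a) 1 \<in> sets borel" "(\<lambda>w::'a. norm w powr p) \<in> borel_measurable borel" for p
    by measurable
  define D where "D w = indicator (cball 0 1) w * norm w powr \<alpha> + indicator (cball 0 1) w
    + indicator {w. 1 < norm w} w * norm w powr (-(real DIM('a) + 1))" for w :: 'a
  have "integrable lborel (\<lambda>w::'a. indicator (cball 0 1) w * norm w powr \<alpha>)"
  proof (rule integrableI_bounded)
    have "(\<integral>\<^sup>+w. ennreal (norm (indicator (cball (0::'a) 1) w * norm w powr \<alpha>)) \<partial>lborel)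
        = (\<integral>\<^sup>+w. indicator (cball (0::'a) 1) w * ennreal (norm w powr \<alpha>) \<partial>lborel)"
      by (intro nn_integral_cong) (auto simp: indicator_def)
    also have "\<dots> < \<infinity>" using \<alpha> by (rule nn_integral_norm_powr_cball_finite)
    finally show "(\<integral>\<^sup>+w. ennreal (norm (indicator (cball (0::'a) 1) w * norm w powr \<alpha>)) \<partial>lborel) < \<infinity>" .
  qed measurable
  moreover have "integrable lborel (\<lambda>w::'a. indicator (cball 0 1) w :: real)"
    by (intro integrable_real_indicator) (auto simp: emeasure_cball)
  moreover have "integrable lborel (\<lambda>w::'a. indicator {w. 1 < norm w} w * norm w powr (-(real DIM('a) + 1)))"
  proof (rule integrableI_bounded)
    have "(\<integral>\<^sup>+w. ennreal (norm (indicator {w::'a. 1 < norm w} w * norm w powr (-(real DIM('a) + 1)))) \<partial>lborel)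
        = (\<integral>\<^sup>+w. indicator {w::'a. 1 < norm w} w * ennreal (norm w powr (-(real DIM('a) + 1))) \<partial>lborel)"
      by (intro nn_integral_cong) (auto simp: indicator_def)
    also have "\<dots> < \<infinity>" by (rule nn_integral_norm_powr_outside_cball_finite) simp
    finally show "(\<integral>\<^sup>+w. ennreal (norm (indicator {w::'a. 1 < norm w} w * norm w powr (-(real DIM('a) + 1))))
        \<partial>lborel) < \<infinity>" .
  qed measurable
  ultimately have "integrable lborel (\<lambda>w. C * D w)"
    unfolding D_def by (intro integrable_mult_right Bochner_Integration.integrable_add)
  moreover have "norm (f w) \<le> norm (C * D w)" for w
    using near[of w] far[of w] by (cases "norm w \<le> 1") (auto simp: D_def distrib_left)
  ultimately show ?thesis
    using Bochner_Integration.integrable_bound[of lborel "\<lambda>w. C * D w" f] by (simp add: AE_I2)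
qed

lemma norm_powr_jbr_powr_gaussian_decay:
  fixes a b c m :: real
  assumes "c > 0"
  obtains K where "K > 0" "\<And>w :: 'a::real_normed_vector. norm w \<ge> 1 \<Longrightarrow>
    norm w powr a * jbr w powr b * exp (-c * (norm w)\<^sup>2) \<le> K * norm w powr (-m)"
proof -
  obtain K where K: "K > 0" "\<And>r. r \<ge> 1 \<Longrightarrow> r powr (a + b + m) * exp (-c * r\<^sup>2) \<le> K"
    using powr_mult_gaussian_bounded[OF assms] by blast
  have "norm w powr a * jbr w powr b * exp (-c * (norm w)\<^sup>2) \<le> (4 powr \<bar>b\<bar> * K) * norm w powr (-m)"
    if w: "norm w \<ge> 1" for w :: 'a
  proof -
    have "norm w powr a * jbr w powr b * exp (-c * (norm w)\<^sup>2)
        \<le> norm w powr a * (4 powr \<bar>b\<bar> * norm w powr b) * exp (-c * (norm w)\<^sup>2)"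
      using jbr_powr_le_if_norm_ge_1[OF w] by (intro mult_right_mono mult_left_mono) auto
    also have "\<dots> = 4 powr \<bar>b\<bar> * norm w powr (-m) * (norm w powr (a + b + m) * exp (-c * (norm w)\<^sup>2))"
    proof -
      have "norm w powr a * norm w powr b = norm w powr (-m) * norm w powr (a + b + m)"
        by (simp add: powr_add[symmetric])
      then show ?thesis by algebra
    qed
    also have "\<dots> \<le> 4 powr \<bar>b\<bar> * norm w powr (-m) * K"
      using K(2)[OF w] by (intro mult_left_mono) auto
    finally show ?thesis by (simp only: mult_ac)
  qed
  moreover have "4 powr \<bar>b\<bar> * K > 0" using K(1) by simp
  ultimately show thesis using that by blast
qed

lemma integrable_norm_powr_jbr_powr_gaussian:
  fixes \<alpha> \<beta> c :: real
  assumes \<alpha>: "\<alpha> > - real DIM('a)" and c: "c > 0"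
  shows "integrable lborel (\<lambda>w::'a::euclidean_space. norm w powr \<alpha> * jbr w powr \<beta> * exp (-c * (norm w)\<^sup>2))"
proof -
  obtain K where K: "K > 0" "\<And>w :: 'a. norm w \<ge> 1 \<Longrightarrow>
      norm w powr \<alpha> * jbr w powr \<beta> * exp (-c * (norm w)\<^sup>2) \<le> K * norm w powr (-(real DIM('a) + 1))"
    using norm_powr_jbr_powr_gaussian_decay[OF c, of \<alpha> \<beta> "real DIM('a) + 1"] by metis
  define M where "M = max (4 powr \<bar>\<beta>\<bar>) K"
  have M: "4 powr \<bar>\<beta>\<bar> \<le> M" "K \<le> M" "0 \<le> M" unfolding M_def using K(1) by auto
  show ?thesis
  proof (rule integrable_if_norm_powr_bounds[OF \<alpha>, where C = M])
    show "(\<lambda>w::'a. norm w powr \<alpha> * jbr w powr \<beta> * exp (-c * (norm w)\<^sup>2)) \<in> borel_measurable lborel"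
      unfolding jbr_def by measurable
  next
    fix w :: 'a assume w: "norm w \<le> 1"
    have "norm w powr \<alpha> * jbr w powr \<beta> * exp (-c * (norm w)\<^sup>2) \<le> norm w powr \<alpha> * M * 1"
      using jbr_powr_bounds_if_norm_le_1[OF w, of \<beta>] M c by (intro mult_mono) auto
    also have "\<dots> \<le> M * (norm w powr \<alpha> + 1)"
      using M(3) by (simp add: distrib_left mult.commute)
    finally show "\<bar>norm w powr \<alpha> * jbr w powr \<beta> * exp (-c * (norm w)\<^sup>2)\<bar> \<le> M * (norm w powr \<alpha> + 1)"
      by simp
  next
    fix w :: 'a assume w: "norm w > 1"
    have "norm w powr \<alpha> * jbr w powr \<beta> * exp (-c * (norm w)\<^sup>2) \<le> K * norm w powr (-(real DIM('a) + 1))"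
      using K(2)[of w] w by linarith
    also have "\<dots> \<le> M * norm w powr (-(real DIM('a) + 1))"
      using M(2) by (rule mult_right_mono) simp
    finally show "\<bar>norm w powr \<alpha> * jbr w powr \<beta> * exp (-c * (norm w)\<^sup>2)\<bar>
        \<le> M * norm w powr (-(real DIM('a) + 1))" by simp
  qed
qed

lemma mu_weight_measurable [measurable]: "mu_weight \<rho> \<delta> \<in> borel_measurable borel"
  unfolding mu_weight_def jbr_def by measurable

lemma integrable_mu_weight:
  fixes \<rho> \<delta> :: real
  assumes "\<rho> > 0"
  shows "integrable lborel (mu_weight \<rho> \<delta> :: 'a::euclidean_space \<Rightarrow> real)"
proof -
  have "integrable lborel (\<lambda>w::'a. norm w powr 0 * jbr w powr \<delta> * exp (-\<rho> * (norm w)\<^sup>2))"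
    using assms by (intro integrable_norm_powr_jbr_powr_gaussian) auto
  then show ?thesis
  proof (rule Bochner_Integration.integrable_bound)
    \<comment> \<open>the two integrands differ only at \<open>0\<close>, where \<open>0 powr 0 = 0\<close>\<close>
    show "AE w in lborel. norm (mu_weight \<rho> \<delta> (w::'a))
        \<le> norm (norm w powr 0 * jbr w powr \<delta> * exp (-\<rho> * (norm w)\<^sup>2))"
      using AE_lborel_singleton[of 0] by eventually_elim (simp add: mu_weight_def)
  qed simp
qed

lemma
  fixes f :: "'a::euclidean_space \<Rightarrow> real" and c :: 'a
  assumes [measurable]: "f \<in> borel_measurable borel"
  shows integrable_lborel_translate: "integrable lborel (\<lambda>x. f (x + c)) \<longleftrightarrow> integrable lborel f"
    and integral_lborel_translate: "(\<integral>x. f (x + c) \<partial>lborel) = (\<integral>x. f x \<partial>lborel)"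
proof -
  have "integrable (distr lborel borel ((+) c)) f \<longleftrightarrow> integrable lborel (\<lambda>x. f (c + x))"
    by (rule integrable_distr_eq) auto
  then show "integrable lborel (\<lambda>x. f (x + c)) \<longleftrightarrow> integrable lborel f"
    by (simp add: lborel_distr_plus add.commute)
  have "(\<integral>x. f x \<partial>distr lborel borel ((+) c)) = (\<integral>x. f (c + x) \<partial>lborel)"
    by (rule integral_distr) auto
  then show "(\<integral>x. f (x + c) \<partial>lborel) = (\<integral>x. f x \<partial>lborel)"
    by (simp add: lborel_distr_plus add.commute)
qed

lemma norm_powr_jbr_powr_comparable:
  fixes u :: "'a::real_normed_vector" and w :: "'b::real_normed_vector"
  assumes "jbr u / 4 \<le> norm w" "norm w \<le> 2 * jbr u"
  shows "4 powr (-(\<bar>\<alpha>\<bar> + \<bar>\<beta>\<bar>)) * jbr u powr (\<alpha> + \<beta>) \<le> norm w powr \<alpha> * jbr w powr \<beta>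
    \<and> norm w powr \<alpha> * jbr w powr \<beta> \<le> 4 powr (\<bar>\<alpha>\<bar> + \<bar>\<beta>\<bar>) * jbr u powr (\<alpha> + \<beta>)"
proof -
  have "norm w \<le> 4 * jbr u" "jbr u / 4 \<le> jbr w" "jbr w \<le> 4 * jbr u"
    using assms norm_le_jbr[of w] jbr_le_1_plus_norm[of w] jbr_ge_1[of u] by linarith+
  then have "4 powr (-\<bar>\<alpha>\<bar>) * jbr u powr \<alpha> \<le> norm w powr \<alpha> \<and> norm w powr \<alpha> \<le> 4 powr \<bar>\<alpha>\<bar> * jbr u powr \<alpha>"
    and "4 powr (-\<bar>\<beta>\<bar>) * jbr u powr \<beta> \<le> jbr w powr \<beta> \<and> jbr w powr \<beta> \<le> 4 powr \<bar>\<beta>\<bar> * jbr u powr \<beta>"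
    using assms powr_comparable[OF jbr_pos[of u]] by blast+
  then have "(4 powr (-\<bar>\<alpha>\<bar>) * jbr u powr \<alpha>) * (4 powr (-\<bar>\<beta>\<bar>) * jbr u powr \<beta>) \<le> norm w powr \<alpha> * jbr w powr \<beta>"
    and "norm w powr \<alpha> * jbr w powr \<beta> \<le> (4 powr \<bar>\<alpha>\<bar> * jbr u powr \<alpha>) * (4 powr \<bar>\<beta>\<bar> * jbr u powr \<beta>)"
    by (auto intro!: mult_mono)
  moreover have "4 powr (-(\<bar>\<alpha>\<bar> + \<bar>\<beta>\<bar>)) = 4 powr (-\<bar>\<alpha>\<bar>) * 4 powr (-\<bar>\<beta>\<bar>)"
    by (simp add: powr_add[symmetric])
  ultimately show ?thesis by (simp add: powr_add mult_ac)
qed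

lemma ball_beyond_neg:
  fixes u :: "'a::{real_normed_vector, perfect_space}"
  obtains p where "\<And>w. w \<in> ball p (1/4) \<Longrightarrow>
    norm (w + u) \<le> 1 \<and> norm u + 1/2 \<le> norm w \<and> norm w \<le> norm u + 1"
proof -
  obtain e :: 'a where e: "norm e = 1" using vector_choose_size[of 1] by auto
  define d where "d = (if u = 0 then e else (1 / norm u) *\<^sub>R u)"
  have d: "norm d = 1" "norm u *\<^sub>R d = u" using e by (simp_all add: d_def)
  \<comment> \<open>the centre lies on the ray through \<open>-u\<close>, at distance \<open>3/4\<close> beyond \<open>-u\<close>\<close>
  define p where "p = (-(norm u + 3/4)) *\<^sub>R d"
  have "p + u = (-(3/4::real)) *\<^sub>R d"
    by (subst d(2)[symmetric]) (simp add: p_def scaleR_left_distrib[symmetric])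
  then have pu: "norm (p + u) = 3/4" using d(1) by simp
  have np: "norm p = norm u + 3/4"
  proof -
    have "0 \<le> norm u + 3/4" by simp
    then show ?thesis
      unfolding p_def norm_scaleR d(1) by (simp only: abs_minus_cancel abs_of_nonneg mult_1_right)
  qed
  have "norm (w + u) \<le> 1 \<and> norm u + 1/2 \<le> norm w \<and> norm w \<le> norm u + 1"
    if "w \<in> ball p (1/4)" for w
  proof -
    have wp: "norm (w - p) < 1/4" using that by (simp add: dist_norm norm_minus_commute)
    have "norm (w + u) \<le> norm (w - p) + norm (p + u)"
      using norm_triangle_ineq[of "w - p" "p + u"] by simp
    moreover have "norm p \<le> norm w + norm (w - p)" "norm w \<le> norm p + norm (w - p)"
      using norm_triangle_sub[of p w] norm_triangle_sub[of w p] by (simp_all add: norm_minus_commute)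
    ultimately show ?thesis using wp pu np by linarith
  qed
  then show thesis by (rule that)
qed

lemma norm_powr_jbr_powr_mu_weight_shift_le_exp:
  fixes \<rho> \<delta> \<alpha> \<beta> :: real
  assumes "\<rho> > 0"
  obtains K where "K > 0" "\<And>u w :: 'a::real_normed_vector.
    norm w powr \<alpha> * jbr w powr \<beta> * mu_weight \<rho> \<delta> (w + u)
      \<le> K * exp (\<rho>/2 * (norm u)\<^sup>2) * (norm w powr \<alpha> * jbr w powr \<beta> * exp (-(\<rho>/4) * (norm w)\<^sup>2))"
proof -
  obtain K where K: "K > 0" "\<And>v :: 'a. mu_weight \<rho> \<delta> v \<le> K * exp (-(\<rho>/2) * (norm v)\<^sup>2)"
    using mu_weight_le_gaussian[OF assms] by metis
  have mu_bound: "mu_weight \<rho> \<delta> (w + u) \<le> K * exp (\<rho>/2 * (norm u)\<^sup>2) * exp (-(\<rho>/4) * (norm w)\<^sup>2)"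
    for u w :: 'a
  proof -
    have "mu_weight \<rho> \<delta> (w + u) \<le> K * exp (-(\<rho>/2) * (norm (w + u))\<^sup>2)" by (rule K(2))
    also have "\<dots> \<le> K * (exp (\<rho>/2 * (norm u)\<^sup>2) * exp (-(\<rho>/2/2) * (norm w)\<^sup>2))"
      using K(1) assms gaussian_shift_le[of "\<rho>/2" w u] by (intro mult_left_mono) auto
    finally show ?thesis by (simp add: mult_ac)
  qed
  have "norm w powr \<alpha> * jbr w powr \<beta> * mu_weight \<rho> \<delta> (w + u)
      \<le> K * exp (\<rho>/2 * (norm u)\<^sup>2) * (norm w powr \<alpha> * jbr w powr \<beta> * exp (-(\<rho>/4) * (norm w)\<^sup>2))"
    for u w :: 'a
  proof -
    have "norm w powr \<alpha> * jbr w powr \<beta> * mu_weight \<rho> \<delta> (w + u)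
        \<le> norm w powr \<alpha> * jbr w powr \<beta> * (K * exp (\<rho>/2 * (norm u)\<^sup>2) * exp (-(\<rho>/4) * (norm w)\<^sup>2))"
      using mu_bound by (rule mult_left_mono) simp
    then show ?thesis by (simp only: mult_ac)
  qed
  with K(1) show thesis by (rule that)
qed

lemma norm_powr_jbr_powr_mu_weight_shift_ge_on_ball:
  fixes u :: "'a::{real_normed_vector, perfect_space}" and \<rho> \<delta> \<alpha> \<beta> :: real
  assumes "\<rho> \<ge> 0"
  obtains p where "\<And>w. w \<in> ball p (1/4) \<Longrightarrow>
    4 powr (-(\<bar>\<alpha>\<bar> + \<bar>\<beta>\<bar>)) * 4 powr (-\<bar>\<delta>\<bar>) * exp (-\<rho>) * jbr u powr (\<alpha> + \<beta>)
      \<le> norm w powr \<alpha> * jbr w powr \<beta> * mu_weight \<rho> \<delta> (w + u)"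
proof -
  obtain p where p: "\<And>w. w \<in> ball p (1/4) \<Longrightarrow>
      norm (w + u) \<le> 1 \<and> norm u + 1/2 \<le> norm w \<and> norm w \<le> norm u + 1"
    using ball_beyond_neg by metis
  have "4 powr (-(\<bar>\<alpha>\<bar> + \<bar>\<beta>\<bar>)) * 4 powr (-\<bar>\<delta>\<bar>) * exp (-\<rho>) * jbr u powr (\<alpha> + \<beta>)
      \<le> norm w powr \<alpha> * jbr w powr \<beta> * mu_weight \<rho> \<delta> (w + u)" if "w \<in> ball p (1/4)" for w
  proof -
    note w = p[OF that]
    have "jbr u / 4 \<le> norm w" "norm w \<le> 2 * jbr u"
      using w norm_le_jbr[of u] jbr_le_1_plus_norm[of u] jbr_ge_1[of u] by linarith+
    then have f: "4 powr (-(\<bar>\<alpha>\<bar> + \<bar>\<beta>\<bar>)) * jbr u powr (\<alpha> + \<beta>) \<le> norm w powr \<alpha> * jbr w powr \<beta>"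
      using norm_powr_jbr_powr_comparable by blast
    have j: "4 powr (-\<bar>\<delta>\<bar>) \<le> jbr (w + u) powr \<delta>"
      using jbr_powr_bounds_if_norm_le_1 w by blast
    have e: "exp (-\<rho>) \<le> exp (-\<rho> * (norm (w + u))\<^sup>2)"
      using w assms by (simp add: power_le_one mult_left_le)
    have "(4 powr (-(\<bar>\<alpha>\<bar> + \<bar>\<beta>\<bar>)) * jbr u powr (\<alpha> + \<beta>)) * (4 powr (-\<bar>\<delta>\<bar>) * exp (-\<rho>))
        \<le> (norm w powr \<alpha> * jbr w powr \<beta>) * (jbr (w + u) powr \<delta> * exp (-\<rho> * (norm (w + u))\<^sup>2))"
      by (rule mult_mono[OF f mult_mono[OF j e]]) simp_all
    then show ?thesis by (simp add: mu_weight_def mult_ac)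
  qed
  then show thesis by (rule that)
qed

lemma norm_powr_jbr_powr_mu_weight_shift_le_jbr_powr:
  fixes \<rho> \<delta> \<alpha> \<beta> :: real
  assumes \<rho>: "\<rho> > 0"
  obtains K where "\<And>u w :: 'a::real_normed_vector. norm u \<ge> 1 \<Longrightarrow>
    norm w powr \<alpha> * jbr w powr \<beta> * mu_weight \<rho> \<delta> (w + u)
      \<le> jbr u powr (\<alpha> + \<beta>) * (4 powr (\<bar>\<alpha>\<bar> + \<bar>\<beta>\<bar>) * mu_weight \<rho> \<delta> (w + u)
          + K * (norm w powr \<alpha> * jbr w powr \<beta> * exp (-(\<rho>/40) * (norm w)\<^sup>2)))"
proof -
  obtain Kg where Kg: "Kg > 0" "\<And>v :: 'a. mu_weight \<rho> \<delta> v \<le> Kg * exp (-(\<rho>/2) * (norm v)\<^sup>2)"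
    using mu_weight_le_gaussian[OF \<rho>] by metis
  obtain Ku where Ku: "Ku > 0" "\<And>u :: 'a. exp (-(\<rho>/16) * (norm u)\<^sup>2) \<le> Ku * jbr u powr (\<alpha> + \<beta>)"
    using exp_neg_le_jbr_powr[of "\<rho>/16"] \<rho> by (metis divide_pos_pos zero_less_numeral)
  define A where "A = 4 powr (\<bar>\<alpha>\<bar> + \<bar>\<beta>\<bar>)"
  define g where "g w = norm w powr \<alpha> * jbr w powr \<beta> * exp (-(\<rho>/40) * (norm w)\<^sup>2)" for w :: 'a
  have "norm w powr \<alpha> * jbr w powr \<beta> * mu_weight \<rho> \<delta> (w + u)
      \<le> jbr u powr (\<alpha> + \<beta>) * (A * mu_weight \<rho> \<delta> (w + u) + Kg * Ku * g w)"
    if u: "norm u \<ge> 1" for u w :: 'a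
  proof (cases "norm u \<le> 2 * norm (w + u)")
    case True
    have "mu_weight \<rho> \<delta> (w + u) \<le> Kg * (exp (-(\<rho>/16) * (norm u)\<^sup>2) * exp (-(\<rho>/40) * (norm w)\<^sup>2))"
      using Kg(2)[of "w + u"] gaussian_shift_le_far[of "\<rho>/2" u w] True \<rho> Kg(1)
      by (auto elim!: order_trans intro!: mult_left_mono)
    also have "\<dots> \<le> Kg * (Ku * jbr u powr (\<alpha> + \<beta>) * exp (-(\<rho>/40) * (norm w)\<^sup>2))"
      using Ku(2)[of u] Kg(1) by (intro mult_left_mono mult_right_mono) auto
    finally have "norm w powr \<alpha> * jbr w powr \<beta> * mu_weight \<rho> \<delta> (w + u)
        \<le> norm w powr \<alpha> * jbr w powr \<beta> * (Kg * (Ku * jbr u powr (\<alpha> + \<beta>) * exp (-(\<rho>/40) * (norm w)\<^sup>2)))"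
      by (rule mult_left_mono) simp
    also have "\<dots> = jbr u powr (\<alpha> + \<beta>) * (Kg * Ku * g w)" by (simp add: g_def mult_ac)
    also have "\<dots> \<le> jbr u powr (\<alpha> + \<beta>) * (A * mu_weight \<rho> \<delta> (w + u) + Kg * Ku * g w)"
      by (intro mult_left_mono) (simp_all add: A_def mu_weight_nonneg)
    finally show ?thesis .
  next
    case False
    have "jbr u / 4 \<le> norm w" "norm w \<le> 2 * jbr u"
      using False u norm_triangle_sub[of w "w + u"] norm_triangle_sub[of u "w + u"]
        norm_le_jbr[of u] jbr_le_1_plus_norm[of u] by simp_all
    then have "norm w powr \<alpha> * jbr w powr \<beta> \<le> A * jbr u powr (\<alpha> + \<beta>)"
      unfolding A_def using norm_powr_jbr_powr_comparable by blast
    then have "norm w powr \<alpha> * jbr w powr \<beta> * mu_weight \<rho> \<delta> (w + u)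
        \<le> A * jbr u powr (\<alpha> + \<beta>) * mu_weight \<rho> \<delta> (w + u)"
      by (rule mult_right_mono[OF _ mu_weight_nonneg])
    also have "\<dots> = jbr u powr (\<alpha> + \<beta>) * (A * mu_weight \<rho> \<delta> (w + u))" by (simp only: mult_ac)
    also have "\<dots> \<le> jbr u powr (\<alpha> + \<beta>) * (A * mu_weight \<rho> \<delta> (w + u) + Kg * Ku * g w)"
      using Kg(1) Ku(1) by (intro mult_left_mono) (simp_all add: g_def)
    finally show ?thesis .
  qed
  then show thesis unfolding A_def g_def by (rule that)
qed

context
  fixes \<rho> \<delta> \<alpha> \<beta> :: real
  assumes rho_pos: "\<rho> > 0" and alpha_gt: "\<alpha> > - real CARD('n::finite)"
begin

lemma integrable_norm_powr_jbr_powr_gaussian_cart: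
  "c > 0 \<Longrightarrow> integrable lborel (\<lambda>w::real^'n. norm w powr \<alpha> * jbr w powr \<beta> * exp (-c * (norm w)\<^sup>2))"
  using alpha_gt by (intro integrable_norm_powr_jbr_powr_gaussian) auto

lemma integrable_I_ab_integrand:
  "integrable lborel (\<lambda>w::real^'n. norm w powr \<alpha> * jbr w powr \<beta> * mu_weight \<rho> \<delta> (w + u))"
proof -
  obtain K where K: "\<And>u w :: real^'n. norm w powr \<alpha> * jbr w powr \<beta> * mu_weight \<rho> \<delta> (w + u)
      \<le> K * exp (\<rho>/2 * (norm u)\<^sup>2) * (norm w powr \<alpha> * jbr w powr \<beta> * exp (-(\<rho>/4) * (norm w)\<^sup>2))"
    using norm_powr_jbr_powr_mu_weight_shift_le_exp[OF rho_pos] by metis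
  have "integrable lborel (\<lambda>w::real^'n.
      K * exp (\<rho>/2 * (norm u)\<^sup>2) * (norm w powr \<alpha> * jbr w powr \<beta> * exp (-(\<rho>/4) * (norm w)\<^sup>2)))"
    using rho_pos by (intro integrable_mult_right integrable_norm_powr_jbr_powr_gaussian_cart) simp
  then show ?thesis
  proof (rule Bochner_Integration.integrable_bound)
    show "(\<lambda>w::real^'n. norm w powr \<alpha> * jbr w powr \<beta> * mu_weight \<rho> \<delta> (w + u)) \<in> borel_measurable lborel"
      unfolding jbr_def by measurable
    show "AE w in lborel. norm (norm w powr \<alpha> * jbr w powr \<beta> * mu_weight \<rho> \<delta> (w + u))
        \<le> norm (K * exp (\<rho>/2 * (norm u)\<^sup>2) * (norm w powr \<alpha> * jbr w powr \<beta> * exp (-(\<rho>/4) * (norm w)\<^sup>2)))"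
      using K[where u = u] by (intro AE_I2) (simp add: mu_weight_nonneg order_trans[OF _ abs_ge_self])
  qed
qed

lemma I_ab_lower_bound:
  obtains C where "C > 0" "\<And>u :: real^'n. C * jbr u powr (\<alpha> + \<beta>) \<le> I_ab \<rho> \<delta> \<alpha> \<beta> u"
proof -
  define c where "c = 4 powr (-(\<bar>\<alpha>\<bar> + \<bar>\<beta>\<bar>)) * 4 powr (-\<bar>\<delta>\<bar>) * exp (-\<rho>)"
  define V where "V = unit_ball_vol CARD('n) * (1/4::real) ^ CARD('n)"
  have "c * V * jbr u powr (\<alpha> + \<beta>) \<le> I_ab \<rho> \<delta> \<alpha> \<beta> u" for u :: "real^'n"
  proof -
    obtain p where p: "\<And>w. w \<in> ball p (1/4) \<Longrightarrow>
        c * jbr u powr (\<alpha> + \<beta>) \<le> norm w powr \<alpha> * jbr w powr \<beta> * mu_weight \<rho> \<delta> (w + u)"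
      using norm_powr_jbr_powr_mu_weight_shift_ge_on_ball[where u = u, OF less_imp_le[OF rho_pos]]
      unfolding c_def by metis
    have "c * V * jbr u powr (\<alpha> + \<beta>) = (\<integral>w. c * jbr u powr (\<alpha> + \<beta>) * indicator (ball p (1/4)) w \<partial>lborel)"
      by (simp add: content_ball V_def)
    also have "\<dots> \<le> I_ab \<rho> \<delta> \<alpha> \<beta> u"
      unfolding I_ab_def using p
      by (intro integral_mono integrable_I_ab_integrand integrable_mult_right integrable_real_indicator)
         (auto simp: emeasure_ball indicator_def mu_weight_nonneg)
    finally show ?thesis .
  qed
  moreover have "c * V > 0" by (simp add: c_def V_def)
  ultimately show thesis using that by blast
qed

lemma I_ab_le_exp:
  obtains C where "C \<ge> 0" "\<And>u :: real^'n. I_ab \<rho> \<delta> \<alpha> \<beta> u \<le> C * exp (\<rho>/2 * (norm u)\<^sup>2)"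
proof -
  obtain K where K: "K > 0" "\<And>u w :: real^'n. norm w powr \<alpha> * jbr w powr \<beta> * mu_weight \<rho> \<delta> (w + u)
      \<le> K * exp (\<rho>/2 * (norm u)\<^sup>2) * (norm w powr \<alpha> * jbr w powr \<beta> * exp (-(\<rho>/4) * (norm w)\<^sup>2))"
    using norm_powr_jbr_powr_mu_weight_shift_le_exp[OF rho_pos] by metis
  define J where "J = integral\<^sup>L lborel (\<lambda>w::real^'n. norm w powr \<alpha> * jbr w powr \<beta> * exp (-(\<rho>/4) * (norm w)\<^sup>2))"
  have "I_ab \<rho> \<delta> \<alpha> \<beta> u \<le> (K * J) * exp (\<rho>/2 * (norm u)\<^sup>2)" for u :: "real^'n"
  proof -
    have "I_ab \<rho> \<delta> \<alpha> \<beta> u \<le> integral\<^sup>L lborel (\<lambda>w::real^'n. K * exp (\<rho>/2 * (norm u)\<^sup>2)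
        * (norm w powr \<alpha> * jbr w powr \<beta> * exp (-(\<rho>/4) * (norm w)\<^sup>2)))"
      unfolding I_ab_def using rho_pos
      by (intro integral_mono integrable_I_ab_integrand integrable_mult_right
          integrable_norm_powr_jbr_powr_gaussian_cart K(2)) simp
    also have "\<dots> = (K * J) * exp (\<rho>/2 * (norm u)\<^sup>2)" by (simp add: J_def)
    finally show ?thesis .
  qed
  moreover have "K * J \<ge> 0" using K(1) by (simp add: J_def)
  ultimately show thesis using that by blast
qed

lemma I_ab_le_if_norm_ge_1:
  obtains C where "\<And>u :: real^'n. norm u \<ge> 1 \<Longrightarrow> I_ab \<rho> \<delta> \<alpha> \<beta> u \<le> C * jbr u powr (\<alpha> + \<beta>)"
proof -
  define A where "A = 4 powr (\<bar>\<alpha>\<bar> + \<bar>\<beta>\<bar>)"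
  define g where "g w = norm w powr \<alpha> * jbr w powr \<beta> * exp (-(\<rho>/40) * (norm w)\<^sup>2)" for w :: "real^'n"
  obtain K where K: "\<And>u w :: real^'n. norm u \<ge> 1 \<Longrightarrow>
      norm w powr \<alpha> * jbr w powr \<beta> * mu_weight \<rho> \<delta> (w + u)
        \<le> jbr u powr (\<alpha> + \<beta>) * (A * mu_weight \<rho> \<delta> (w + u) + K * g w)"
    using norm_powr_jbr_powr_mu_weight_shift_le_jbr_powr[OF rho_pos] unfolding A_def g_def by metis
  define M where "M = integral\<^sup>L lborel (mu_weight \<rho> \<delta> :: real^'n \<Rightarrow> real)"
  have "I_ab \<rho> \<delta> \<alpha> \<beta> u \<le> (A * M + K * integral\<^sup>L lborel g) * jbr u powr (\<alpha> + \<beta>)"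
    if "norm u \<ge> 1" for u :: "real^'n"
  proof -
    have mu: "integrable lborel (\<lambda>w::real^'n. mu_weight \<rho> \<delta> (w + u))"
      using integrable_mu_weight[OF rho_pos] by (simp add: integrable_lborel_translate)
    have g: "integrable lborel g"
      unfolding g_def using rho_pos by (intro integrable_norm_powr_jbr_powr_gaussian_cart) simp
    have "I_ab \<rho> \<delta> \<alpha> \<beta> u \<le> (\<integral>w. jbr u powr (\<alpha> + \<beta>) * (A * mu_weight \<rho> \<delta> (w + u) + K * g w) \<partial>lborel)"
      unfolding I_ab_def using mu g K[OF that] by (intro integral_mono integrable_I_ab_integrand) auto
    also have "\<dots> = (A * M + K * integral\<^sup>L lborel g) * jbr u powr (\<alpha> + \<beta>)"
      using mu g by (simp add: M_def integral_lborel_translate)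
    finally show ?thesis .
  qed
  then show thesis by (rule that)
qed

lemma I_ab_upper_bound:
  obtains C where "C > 0" "\<And>u :: real^'n. I_ab \<rho> \<delta> \<alpha> \<beta> u \<le> C * jbr u powr (\<alpha> + \<beta>)"
proof -
  obtain C0 where C0: "C0 \<ge> 0" "\<And>u :: real^'n. I_ab \<rho> \<delta> \<alpha> \<beta> u \<le> C0 * exp (\<rho>/2 * (norm u)\<^sup>2)"
    using I_ab_le_exp by metis
  obtain C1 where C1: "\<And>u :: real^'n. norm u \<ge> 1 \<Longrightarrow> I_ab \<rho> \<delta> \<alpha> \<beta> u \<le> C1 * jbr u powr (\<alpha> + \<beta>)"
    using I_ab_le_if_norm_ge_1 by metis
  define C where "C = max 1 (max C1 (C0 * exp (\<rho>/2) * 4 powr \<bar>\<alpha> + \<beta>\<bar>))"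
  have "I_ab \<rho> \<delta> \<alpha> \<beta> u \<le> C * jbr u powr (\<alpha> + \<beta>)" for u :: "real^'n"
  proof (cases "norm u \<ge> 1")
    case True
    then have "I_ab \<rho> \<delta> \<alpha> \<beta> u \<le> C1 * jbr u powr (\<alpha> + \<beta>)" by (rule C1)
    also have "\<dots> \<le> C * jbr u powr (\<alpha> + \<beta>)" by (intro mult_right_mono) (auto simp: C_def)
    finally show ?thesis .
  next
    case False
    then have "(norm u)\<^sup>2 \<le> 1" by (simp add: power_le_one)
    then have "exp (\<rho>/2 * (norm u)\<^sup>2) \<le> exp (\<rho>/2)" using rho_pos by (simp add: mult_left_le)
    then have "I_ab \<rho> \<delta> \<alpha> \<beta> u \<le> C0 * exp (\<rho>/2)"
      using C0 by (meson mult_left_mono order_trans)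
    also have "\<dots> \<le> C0 * exp (\<rho>/2) * (4 powr \<bar>\<alpha> + \<beta>\<bar> * jbr u powr (\<alpha> + \<beta>))"
    proof -
      have "4 powr (-\<bar>\<alpha> + \<beta>\<bar>) \<le> jbr u powr (\<alpha> + \<beta>)"
        using jbr_powr_bounds_if_norm_le_1[of u "\<alpha> + \<beta>"] False by simp
      then have "1 \<le> 4 powr \<bar>\<alpha> + \<beta>\<bar> * jbr u powr (\<alpha> + \<beta>)"
        by (simp add: powr_minus field_simps)
      then show ?thesis using mult_left_mono[of 1 _ "C0 * exp (\<rho>/2)"] C0(1) by simp
    qed
    also have "\<dots> \<le> C * jbr u powr (\<alpha> + \<beta>)"
      by (simp only: mult.assoc[symmetric], intro mult_right_mono) (auto simp: C_def)
    finally show ?thesis .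
  qed
  moreover have "C > 0" by (simp add: C_def)
  ultimately show thesis using that by blast
qed

end

theorem lemma2p5:
  fixes \<rho> \<delta> \<alpha> \<beta> :: real
  assumes "\<rho> > 0" and "\<alpha> > - real CARD('n::finite)"
  shows "\<exists>C1 C2. C1 > 0 \<and> C2 > 0 \<and>
    (\<forall>u :: real ^ 'n. C1 * jbr u powr (\<alpha> + \<beta>) \<le> I_ab \<rho> \<delta> \<alpha> \<beta> u
                     \<and> I_ab \<rho> \<delta> \<alpha> \<beta> u \<le> C2 * jbr u powr (\<alpha> + \<beta>))"
proof -
  obtain C1 where "C1 > 0" "\<And>u :: real^'n. C1 * jbr u powr (\<alpha> + \<beta>) \<le> I_ab \<rho> \<delta> \<alpha> \<beta> u"
    using I_ab_lower_bound[OF assms] by metis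
  moreover obtain C2 where "C2 > 0" "\<And>u :: real^'n. I_ab \<rho> \<delta> \<alpha> \<beta> u \<le> C2 * jbr u powr (\<alpha> + \<beta>)"
    using I_ab_upper_bound[OF assms] by metis
  ultimately show ?thesis by blast
qed

end
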